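(* Let $L=\langle S,A,\to\rangle$ be a labelled transition system. For all $x,y,z\in\{o,b\}$ and all $s,t\in S$: $s\le_{(z,x)}t$ if and only if $s\le_{(z,y)}t$.
   Context: An LTS is $\langle S,A,\to\rangle$ with states $S$, actions $A$ containing the internal action $\tau$, and $\to\subseteq S\times A\times S$; write $s\xrightarrow{a}t$, and $\twoheadrightarrow$ for the reflexive-transitive closure of $\xrightarrow{\tau}$. For $R\subseteq S\times S$ and $s,s',t$: $s\twoheadrightarrow_{o,R,t}s'$ iff $s\twoheadrightarrow s'$; $s\twoheadrightarrow_{b,R,t}s'$ iff $s\twoheadrightarrow s'$, $t\,R\,s$ and $t\,R\,s'$. For $x,y\in\{o,b\}$, a (not necessarily symmetric) relation $R\subseteq S\times S$ is an $(x,y)$-generic simulation if whenever $s\,R\,t$ and $s\xrightarrow{a}s'$, either $a=\tau$ and $s'\,R\,t$, or there exist $t',t_1,t_2$ with $t\twoheadrightarrow_{x,R,s}t_1\xrightarrow{a}t_2\twoheadrightarrow_{y,R,s'}t'$ and $s'\,R\,t'$. Write $s\le_{(x,y)}t$ iff there is an $(x,y)$-generic simulation $R$ with $s\,R\,t$. *)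

theory Defs
  imports Main
begin

datatype mode = ModeO | ModeB

definition tau_steps :: "('s \<Rightarrow> 'a \<Rightarrow> 's \<Rightarrow> bool) \<Rightarrow> 'a \<Rightarrow> 's \<Rightarrow> 's \<Rightarrow> bool" where
  "tau_steps tr tau = (\<lambda>s t. tr s tau t)\<^sup>*\<^sup>*"

definition mstep ::
  "('s \<Rightarrow> 'a \<Rightarrow> 's \<Rightarrow> bool) \<Rightarrow> 'a \<Rightarrow> mode \<Rightarrow> ('s \<Rightarrow> 's \<Rightarrow> bool) \<Rightarrow> 's \<Rightarrow> 's \<Rightarrow> 's \<Rightarrow> bool" where
  "mstep tr tau x R t s s' =
     (case x of
        ModeO \<Rightarrow> tau_steps tr tau s s'
      | ModeB \<Rightarrow> tau_steps tr tau s s' \<and> R t s \<and> R t s')"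

definition generic_sim ::
  "('s \<Rightarrow> 'a \<Rightarrow> 's \<Rightarrow> bool) \<Rightarrow> 'a \<Rightarrow> mode \<Rightarrow> mode \<Rightarrow> ('s \<Rightarrow> 's \<Rightarrow> bool) \<Rightarrow> bool" where
  "generic_sim tr tau x y R =
     (\<forall>s t a s'. R s t \<longrightarrow> tr s a s' \<longrightarrow>
        ((a = tau \<and> R s' t) \<or>
         (\<exists>t' t1 t2. mstep tr tau x R s t t1 \<and> tr t1 a t2 \<and> mstep tr tau y R s' t2 t' \<and> R s' t')))"

definition gsim_le ::
  "('s \<Rightarrow> 'a \<Rightarrow> 's \<Rightarrow> bool) \<Rightarrow> 'a \<Rightarrow> mode \<Rightarrow> mode \<Rightarrow> 's \<Rightarrow> 's \<Rightarrow> bool" where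
  "gsim_le tr tau x y s t = (\<exists>R. generic_sim tr tau x y R \<and> R s t)"

end

theory Submission
  imports Defs
begin

text \<open>The trailing \<tau>-steps after a matched action are what distinguish the second mode, and
  they can always be absorbed into the relation: if \<open>R\<close> is a \<open>(z, x)\<close>-simulation, then relating
  \<open>s\<close> to every \<tau>-predecessor of an \<open>R\<close>-partner of \<open>s\<close> gives a \<open>(z, y)\<close>-simulation for any \<open>y\<close>.
  An answer \<open>t \<twoheadrightarrow> t\<^sub>1 \<rightarrow>\<^sup>a t\<^sub>2 \<twoheadrightarrow> t'\<close> for \<open>R\<close> becomes the answer
  \<open>u \<twoheadrightarrow> t\<^sub>1 \<rightarrow>\<^sup>a t\<^sub>2\<close> with an empty tail, since \<open>t\<^sub>2\<close> is a \<tau>-predecessor of \<open>t'\<close>.\<close>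

definition tau_expand ::
  "('s \<Rightarrow> 'a \<Rightarrow> 's \<Rightarrow> bool) \<Rightarrow> 'a \<Rightarrow> ('s \<Rightarrow> 's \<Rightarrow> bool) \<Rightarrow> 's \<Rightarrow> 's \<Rightarrow> bool" where
  "tau_expand tr tau R s u = (\<exists>t. tau_steps tr tau u t \<and> R s t)"

lemma tau_steps_refl: "tau_steps tr tau s s"
  by (simp add: tau_steps_def)

lemma tau_steps_trans:
  "tau_steps tr tau s t \<Longrightarrow> tau_steps tr tau t u \<Longrightarrow> tau_steps tr tau s u"
  unfolding tau_steps_def by (rule rtranclp_trans)

lemma mstep_imp_tau_steps: "mstep tr tau x R t s s' \<Longrightarrow> tau_steps tr tau s s'"
  by (cases x) (auto simp: mstep_def)

lemma mstep_refl: "R t s \<Longrightarrow> mstep tr tau x R t s s"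
  by (cases x) (auto simp: mstep_def tau_steps_refl)

lemma tau_expandI: "R s t \<Longrightarrow> tau_expand tr tau R s t"
  unfolding tau_expand_def using tau_steps_refl by fast

lemma mstep_tau_expand:
  assumes "mstep tr tau x R s t t\<^sub>1" and "tau_steps tr tau u t" and "R s t"
  shows "mstep tr tau x (tau_expand tr tau R) s u t\<^sub>1"
proof -
  have "tau_steps tr tau u t\<^sub>1"
    using assms(2) mstep_imp_tau_steps[OF assms(1)] by (rule tau_steps_trans)
  moreover have "tau_expand tr tau R s u"
    using assms(2,3) unfolding tau_expand_def by blast
  ultimately show ?thesis
    using assms(1) by (cases x) (auto simp: mstep_def intro: tau_expandI)
qed

lemma generic_sim_tau_expand:
  assumes sim: "generic_sim tr tau z x R"
  shows "generic_sim tr tau z y (tau_expand tr tau R)"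
  unfolding generic_sim_def
proof (intro allI impI)
  let ?R' = "tau_expand tr tau R"
  fix s u a s'
  assume "?R' s u" and step: "tr s a s'"
  then obtain t where ut: "tau_steps tr tau u t" and Rst: "R s t"
    unfolding tau_expand_def by blast
  from sim Rst step consider
      "a = tau" "R s' t"
    | t' t\<^sub>1 t\<^sub>2 where "mstep tr tau z R s t t\<^sub>1" "tr t\<^sub>1 a t\<^sub>2"
        "mstep tr tau x R s' t\<^sub>2 t'" "R s' t'"
    unfolding generic_sim_def by blast
  then show "(a = tau \<and> ?R' s' u) \<or>
      (\<exists>t' t\<^sub>1 t\<^sub>2. mstep tr tau z ?R' s u t\<^sub>1 \<and> tr t\<^sub>1 a t\<^sub>2 \<and> mstep tr tau y ?R' s' t\<^sub>2 t' \<and> ?R' s' t')"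
  proof cases
    case 1
    then show ?thesis using ut unfolding tau_expand_def by blast
  next
    case (2 t' t\<^sub>1 t\<^sub>2)
    have "mstep tr tau z ?R' s u t\<^sub>1"
      using 2(1) ut Rst by (rule mstep_tau_expand)
    moreover have "?R' s' t\<^sub>2"
      using 2(3,4) unfolding tau_expand_def by (blast dest: mstep_imp_tau_steps)
    moreover have "mstep tr tau y ?R' s' t\<^sub>2 t\<^sub>2"
      using \<open>?R' s' t\<^sub>2\<close> by (rule mstep_refl)
    ultimately show ?thesis
      using 2(2) by blast
  qed
qed

lemma gsim_le_change_second_mode:
  "gsim_le tr tau z x s t \<Longrightarrow> gsim_le tr tau z y s t"
  unfolding gsim_le_def using generic_sim_tau_expand tau_expandI by metis

theorem proposition6p13:
  fixes tr :: "'s \<Rightarrow> 'a \<Rightarrow> 's \<Rightarrow> bool" and tau :: 'a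
    and x y z :: mode and s t :: 's
  shows "gsim_le tr tau z x s t \<longleftrightarrow> gsim_le tr tau z y s t"
  using gsim_le_change_second_mode by metis

end
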